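(* If $\mathcal A$ is a finite non-associative algebra which has a qualitative representation, and $n$ is the number of atoms of $\mathcal A$, then $\mathcal A$ has a qualitative representation whose base has at most $3n^3$ points.
   Context: A non-associative algebra is an algebra $(A,0,1,+,-,1',\breve{\ },;)$ such that $(A,0,1,+,-)$ is a boolean algebra (with $x\cdot y=-(-x+-y)$ and $x\le y\iff x+y=y$); $1';x=x=x;1'$, $\breve{\breve x}=x$, $(x;y)\breve{}=\breve y;\breve x$; $\breve 0=x;0=0$, $(x+y)\breve{}=\breve x+\breve y$, $x;(y+z)=x;y+x;z$; and the Peircean law holds: $x;y\cdot\breve z=0$ iff $y;z\cdot\breve x=0$. An atom is a minimal nonzero element. A qualitative representation of $\mathcal A$ over base $D$ is an injective map $\phi:A\to\wp(D\times D)$ such that $0^\phi=\varnothing$, $1^\phi=D\times D$, $(1')^\phi=\{(x,x):x\in D\}$, $(a+b)^\phi=a^\phi\cup b^\phi$, $(-a)^\phi=(D\times D)\setminus a^\phi$, $(\breve a)^\phi=\{(y,x):(x,y)\in a^\phi\}$, and for all $a,b,c\in A$: $c^\phi\supseteq a^\phi\circ b^\phi\iff c\ge a;b$ (where $r\circ s$ is relational composition). *)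

theory Defs
  imports Main
begin

record 'a na_alg =
  carrier :: "'a set"
  zero :: 'a
  one :: 'a
  plus :: "'a \<Rightarrow> 'a \<Rightarrow> 'a"
  compl :: "'a \<Rightarrow> 'a"
  ident :: 'a
  conv :: "'a \<Rightarrow> 'a"
  comp :: "'a \<Rightarrow> 'a \<Rightarrow> 'a"

definition meet :: "'a na_alg \<Rightarrow> 'a \<Rightarrow> 'a \<Rightarrow> 'a" where
  "meet R x y = compl R (plus R (compl R x) (compl R y))"

definition leq :: "'a na_alg \<Rightarrow> 'a \<Rightarrow> 'a \<Rightarrow> bool" where
  "leq R x y \<longleftrightarrow> plus R x y = y"

definition boolean_alg :: "'a na_alg \<Rightarrow> bool" where
  "boolean_alg R \<longleftrightarrow>
    zero R \<in> carrier R \<and> one R \<in> carrier R \<and>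
    (\<forall>x\<in>carrier R. \<forall>y\<in>carrier R. plus R x y \<in> carrier R) \<and>
    (\<forall>x\<in>carrier R. compl R x \<in> carrier R) \<and>
    (\<forall>x\<in>carrier R. \<forall>y\<in>carrier R. plus R x y = plus R y x) \<and>
    (\<forall>x\<in>carrier R. \<forall>y\<in>carrier R. meet R x y = meet R y x) \<and>
    (\<forall>x\<in>carrier R. \<forall>y\<in>carrier R. \<forall>z\<in>carrier R. plus R x (plus R y z) = plus R (plus R x y) z) \<and>
    (\<forall>x\<in>carrier R. \<forall>y\<in>carrier R. \<forall>z\<in>carrier R. meet R x (meet R y z) = meet R (meet R x y) z) \<and>
    (\<forall>x\<in>carrier R. \<forall>y\<in>carrier R. plus R x (meet R x y) = x) \<and>
    (\<forall>x\<in>carrier R. \<forall>y\<in>carrier R. meet R x (plus R x y) = x) \<and>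
    (\<forall>x\<in>carrier R. \<forall>y\<in>carrier R. \<forall>z\<in>carrier R. meet R x (plus R y z) = plus R (meet R x y) (meet R x z)) \<and>
    (\<forall>x\<in>carrier R. \<forall>y\<in>carrier R. \<forall>z\<in>carrier R. plus R x (meet R y z) = meet R (plus R x y) (plus R x z)) \<and>
    (\<forall>x\<in>carrier R. plus R x (compl R x) = one R) \<and>
    (\<forall>x\<in>carrier R. meet R x (compl R x) = zero R)"

definition nonassoc_alg :: "'a na_alg \<Rightarrow> bool" where
  "nonassoc_alg R \<longleftrightarrow>
    boolean_alg R \<and>
    ident R \<in> carrier R \<and>
    (\<forall>x\<in>carrier R. conv R x \<in> carrier R) \<and>
    (\<forall>x\<in>carrier R. \<forall>y\<in>carrier R. comp R x y \<in> carrier R) \<and>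
    (\<forall>x\<in>carrier R. comp R (ident R) x = x \<and> comp R x (ident R) = x) \<and>
    (\<forall>x\<in>carrier R. conv R (conv R x) = x) \<and>
    (\<forall>x\<in>carrier R. \<forall>y\<in>carrier R. conv R (comp R x y) = comp R (conv R y) (conv R x)) \<and>
    conv R (zero R) = zero R \<and>
    (\<forall>x\<in>carrier R. comp R x (zero R) = zero R) \<and>
    (\<forall>x\<in>carrier R. \<forall>y\<in>carrier R. conv R (plus R x y) = plus R (conv R x) (conv R y)) \<and>
    (\<forall>x\<in>carrier R. \<forall>y\<in>carrier R. \<forall>z\<in>carrier R.
        comp R x (plus R y z) = plus R (comp R x y) (comp R x z)) \<and>
    (\<forall>x\<in>carrier R. \<forall>y\<in>carrier R. \<forall>z\<in>carrier R.
        meet R (comp R x y) (conv R z) = zero R \<longleftrightarrow> meet R (comp R y z) (conv R x) = zero R)"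

definition is_atom :: "'a na_alg \<Rightarrow> 'a \<Rightarrow> bool" where
  "is_atom R a \<longleftrightarrow> a \<in> carrier R \<and> a \<noteq> zero R \<and>
     (\<forall>b\<in>carrier R. leq R b a \<longrightarrow> b = zero R \<or> b = a)"

definition atoms :: "'a na_alg \<Rightarrow> 'a set" where
  "atoms R = {a. is_atom R a}"

definition qual_rep :: "'a na_alg \<Rightarrow> 'b set \<Rightarrow> ('a \<Rightarrow> ('b \<times> 'b) set) \<Rightarrow> bool" where
  "qual_rep R D \<phi> \<longleftrightarrow>
    inj_on \<phi> (carrier R) \<and>
    \<phi> (zero R) = {} \<and>
    \<phi> (one R) = D \<times> D \<and>
    \<phi> (ident R) = {(x, x) | x. x \<in> D} \<and>
    (\<forall>a\<in>carrier R. \<forall>b\<in>carrier R. \<phi> (plus R a b) = \<phi> a \<union> \<phi> b) \<and>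
    (\<forall>a\<in>carrier R. \<phi> (compl R a) = (D \<times> D) - \<phi> a) \<and>
    (\<forall>a\<in>carrier R. \<phi> (conv R a) = {(y, x). (x, y) \<in> \<phi> a}) \<and>
    (\<forall>a\<in>carrier R. \<forall>b\<in>carrier R. \<forall>c\<in>carrier R.
        (\<phi> a O \<phi> b \<subseteq> \<phi> c) \<longleftrightarrow> leq R (comp R a b) c)"

end

theory Submission
  imports Defs
begin

text \<open>In a representation over \<open>D\<close> every pair \<open>p \<in> D \<times> D\<close> lies in the image of exactly one
  atom, the least element whose image contains \<open>p\<close>, and all pairs in the image of an atom
  lie in the images of the same elements. Hence a subset \<open>D'\<close> of the base still carries a
  representation (by restriction) as soon as each triangle \<open>(x, y, z)\<close> of \<open>D\<close> has a copy in
  \<open>D'\<close> whose three edges lie in the same atoms: restriction then reflects both inclusions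
  and compositions. Picking one such triangle for each of the at most \<open>n\<^sup>3\<close> realised triples
  of atoms gives a base of at most \<open>3 n\<^sup>3\<close> points.\<close>

definition same_type :: "'a set \<Rightarrow> ('a \<Rightarrow> ('b \<times> 'b) set) \<Rightarrow> 'b \<times> 'b \<Rightarrow> 'b \<times> 'b \<Rightarrow> bool" where
  "same_type C \<phi> p q \<longleftrightarrow> (\<forall>v\<in>C. p \<in> \<phi> v \<longleftrightarrow> q \<in> \<phi> v)"

definition triangles_realised ::
    "'a set \<Rightarrow> ('a \<Rightarrow> ('b \<times> 'b) set) \<Rightarrow> 'b set \<Rightarrow> 'b set \<Rightarrow> bool" where
  "triangles_realised C \<phi> D D' \<longleftrightarrow>
    (\<forall>x\<in>D. \<forall>y\<in>D. \<forall>z\<in>D. \<exists>x'\<in>D'. \<exists>y'\<in>D'. \<exists>z'\<in>D'.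
       same_type C \<phi> (x, y) (x', y') \<and> same_type C \<phi> (y, z) (y', z') \<and>
       same_type C \<phi> (x, z) (x', z'))"

fun triangles :: "('a \<Rightarrow> ('b \<times> 'b) set) \<Rightarrow> 'a \<times> 'a \<times> 'a \<Rightarrow> ('b \<times> 'b \<times> 'b) set" where
  "triangles \<phi> (a, b, c) = {(x, y, z). (x, y) \<in> \<phi> a \<and> (y, z) \<in> \<phi> b \<and> (x, z) \<in> \<phi> c}"

fun vertices :: "'b \<times> 'b \<times> 'b \<Rightarrow> 'b set" where
  "vertices (x, y, z) = {x, y, z}"

lemma finite_vertices: "finite (vertices u)"
  by (cases u) simp

lemma card_vertices: "card (vertices u) \<le> 3"
  by (cases u) (simp add: card_insert_if)

lemma same_typeD: "same_type C \<phi> p q \<Longrightarrow> v \<in> C \<Longrightarrow> p \<in> \<phi> v \<longleftrightarrow> q \<in> \<phi> v"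
  unfolding same_type_def by blast

lemma triangles_realisedE:
  assumes "triangles_realised C \<phi> D D'" "x \<in> D" "y \<in> D" "z \<in> D"
  obtains x' y' z' where "x' \<in> D'" "y' \<in> D'" "z' \<in> D'"
    "same_type C \<phi> (x, y) (x', y')" "same_type C \<phi> (y, z) (y', z')"
    "same_type C \<phi> (x, z) (x', z')"
  using assms unfolding triangles_realised_def by blast

lemma qual_repD:
  assumes "qual_rep R D \<phi>"
  shows "inj_on \<phi> (carrier R)" "\<phi> (zero R) = {}" "\<phi> (one R) = D \<times> D"
    "\<phi> (ident R) = {(x, x) | x. x \<in> D}"
    "\<And>a b. a \<in> carrier R \<Longrightarrow> b \<in> carrier R \<Longrightarrow> \<phi> (plus R a b) = \<phi> a \<union> \<phi> b"
    "\<And>a. a \<in> carrier R \<Longrightarrow> \<phi> (compl R a) = D \<times> D - \<phi> a"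
    "\<And>a. a \<in> carrier R \<Longrightarrow> \<phi> (conv R a) = {(y, x). (x, y) \<in> \<phi> a}"
    "\<And>a b c. a \<in> carrier R \<Longrightarrow> b \<in> carrier R \<Longrightarrow> c \<in> carrier R \<Longrightarrow>
       \<phi> a O \<phi> b \<subseteq> \<phi> c \<longleftrightarrow> leq R (comp R a b) c"
  using assms by (simp_all add: qual_rep_def)

lemma qual_rep_restrict:
  assumes rep: "qual_rep R D \<phi>"
    and rep_sub: "\<And>a. a \<in> carrier R \<Longrightarrow> \<phi> a \<subseteq> D \<times> D"
    and "D' \<subseteq> D"
    and tri: "triangles_realised (carrier R) \<phi> D D'"
  shows "qual_rep R D' (\<lambda>a. \<phi> a \<inter> D' \<times> D')"
proof -
  let ?C = "carrier R" and ?\<psi> = "\<lambda>a. \<phi> a \<inter> D' \<times> D'"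
  have comp_reflect: "\<phi> a O \<phi> b \<subseteq> \<phi> c"
    if abc: "a \<in> ?C" "b \<in> ?C" "c \<in> ?C" and sub: "?\<psi> a O ?\<psi> b \<subseteq> ?\<psi> c" for a b c
  proof
    fix p assume "p \<in> \<phi> a O \<phi> b"
    then obtain x y z where p: "p = (x, z)" and xy: "(x, y) \<in> \<phi> a" and yz: "(y, z) \<in> \<phi> b"
      by blast
    have "x \<in> D" "y \<in> D" "z \<in> D" using xy yz rep_sub abc by blast+
    then obtain x' y' z' where D': "x' \<in> D'" "y' \<in> D'" "z' \<in> D'"
      and xy': "same_type ?C \<phi> (x, y) (x', y')" and yz': "same_type ?C \<phi> (y, z) (y', z')"
      and xz': "same_type ?C \<phi> (x, z) (x', z')"
      by (rule triangles_realisedE[OF tri])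
    have "(x', y') \<in> \<phi> a" using same_typeD[OF xy' abc(1)] xy by blast
    moreover have "(y', z') \<in> \<phi> b" using same_typeD[OF yz' abc(2)] yz by blast
    ultimately have "(x', z') \<in> \<phi> c" using sub D' by blast
    then show "p \<in> \<phi> c" using same_typeD[OF xz' abc(3)] p by blast
  qed
  have incl_reflect: "\<phi> a \<subseteq> \<phi> b" if ab: "a \<in> ?C" "b \<in> ?C" and sub: "?\<psi> a \<subseteq> ?\<psi> b" for a b
  proof
    fix p assume pa: "p \<in> \<phi> a"
    then obtain x y where p: "p = (x, y)" and "x \<in> D" "y \<in> D" using rep_sub ab by blast
    then obtain x' y' where D': "x' \<in> D'" "y' \<in> D'" and xy': "same_type ?C \<phi> (x, y) (x', y')"
      using triangles_realisedE[OF tri, of x y y] by blast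
    have "(x', y') \<in> \<phi> a" using same_typeD[OF xy' ab(1)] pa p by blast
    then have "(x', y') \<in> \<phi> b" using sub D' by blast
    then show "p \<in> \<phi> b" using same_typeD[OF xy' ab(2)] p by blast
  qed
  have "inj_on ?\<psi> ?C"
  proof (rule inj_onI)
    fix a b assume ab: "a \<in> ?C" "b \<in> ?C" and eq: "?\<psi> a = ?\<psi> b"
    have "\<phi> a = \<phi> b" using incl_reflect[OF ab] incl_reflect[OF ab(2,1)] eq by blast
    with ab show "a = b" using qual_repD(1)[OF rep] by (meson inj_onD)
  qed
  moreover have "?\<psi> a O ?\<psi> b \<subseteq> ?\<psi> c \<longleftrightarrow> leq R (comp R a b) c"
    if "a \<in> ?C" "b \<in> ?C" "c \<in> ?C" for a b c
  proof
    assume "?\<psi> a O ?\<psi> b \<subseteq> ?\<psi> c"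
    then show "leq R (comp R a b) c" using comp_reflect[OF that] qual_repD(8)[OF rep that] by blast
  next
    assume "leq R (comp R a b) c"
    then have "\<phi> a O \<phi> b \<subseteq> \<phi> c" using qual_repD(8)[OF rep that] by blast
    then show "?\<psi> a O ?\<psi> b \<subseteq> ?\<psi> c" by blast
  qed
  moreover have "?\<psi> (compl R a) = D' \<times> D' - ?\<psi> a" if "a \<in> ?C" for a
    using that \<open>D' \<subseteq> D\<close> by (auto simp: qual_repD(6)[OF rep])
  moreover have "?\<psi> (one R) = D' \<times> D'"
    using qual_repD(3)[OF rep] \<open>D' \<subseteq> D\<close> by blast
  moreover have "?\<psi> (ident R) = {(x, x) | x. x \<in> D'}"
    using qual_repD(4)[OF rep] \<open>D' \<subseteq> D\<close> by blast
  moreover have "?\<psi> (plus R a b) = ?\<psi> a \<union> ?\<psi> b" if "a \<in> ?C" "b \<in> ?C" for a b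
    using qual_repD(5)[OF rep that] by blast
  moreover have "?\<psi> (conv R a) = {(y, x). (x, y) \<in> ?\<psi> a}" if "a \<in> ?C" for a
    using qual_repD(7)[OF rep that] by blast
  ultimately show ?thesis
    unfolding qual_rep_def using qual_repD(2)[OF rep] by simp
qed

lemma qual_rep_bij_betw:
  assumes rep: "qual_rep R D \<phi>"
    and rep_sub: "\<And>a. a \<in> carrier R \<Longrightarrow> \<phi> a \<subseteq> D \<times> D"
    and h: "bij_betw h A D"
  shows "qual_rep R A (\<lambda>a. map_prod h h -` \<phi> a \<inter> A \<times> A)"
proof -
  let ?C = "carrier R" and ?\<psi> = "\<lambda>a. map_prod h h -` \<phi> a \<inter> A \<times> A"
  have h_inj: "inj_on h A" and h_onto: "h ` A = D" using h by (simp_all add: bij_betw_def)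
  have image: "map_prod h h ` ?\<psi> a = \<phi> a" if a: "a \<in> ?C" for a
  proof
    show "\<phi> a \<subseteq> map_prod h h ` ?\<psi> a"
    proof
      fix p assume p: "p \<in> \<phi> a"
      then obtain i j where "i \<in> A" "j \<in> A" and p_eq: "p = (h i, h j)"
        using rep_sub[OF a] h_onto by blast
      have "p = map_prod h h (i, j)" using p_eq by simp
      moreover from p p_eq \<open>i \<in> A\<close> \<open>j \<in> A\<close> have "(i, j) \<in> ?\<psi> a" by simp
      ultimately show "p \<in> map_prod h h ` ?\<psi> a" by (rule image_eqI)
    qed
  qed auto
  have "inj_on ?\<psi> ?C"
  proof (rule inj_onI)
    fix a b assume ab: "a \<in> ?C" "b \<in> ?C" and eq: "?\<psi> a = ?\<psi> b"
    have "\<phi> a = map_prod h h ` ?\<psi> a" using image[OF ab(1)] by (rule sym)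
    also have "\<dots> = \<phi> b" unfolding eq using image[OF ab(2)] .
    finally show "a = b" using ab qual_repD(1)[OF rep] by (meson inj_onD)
  qed
  moreover have "?\<psi> a O ?\<psi> b \<subseteq> ?\<psi> c \<longleftrightarrow> \<phi> a O \<phi> b \<subseteq> \<phi> c"
    if abc: "a \<in> ?C" "b \<in> ?C" "c \<in> ?C" for a b c
  proof
    assume sub: "?\<psi> a O ?\<psi> b \<subseteq> ?\<psi> c"
    show "\<phi> a O \<phi> b \<subseteq> \<phi> c"
    proof
      fix p assume "p \<in> \<phi> a O \<phi> b"
      then obtain x y z where p: "p = (x, z)" and xy: "(x, y) \<in> \<phi> a" and yz: "(y, z) \<in> \<phi> b"
        by blast
      have "x \<in> h ` A" "y \<in> h ` A" "z \<in> h ` A" using xy yz rep_sub abc h_onto by blast+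
      then obtain i j k where ijk: "i \<in> A" "j \<in> A" "k \<in> A" and "x = h i" "y = h j" "z = h k"
        by blast
      with xy yz have "(i, j) \<in> ?\<psi> a" "(j, k) \<in> ?\<psi> b" by simp_all
      then have "(i, k) \<in> ?\<psi> c" using sub by blast
      then show "p \<in> \<phi> c" unfolding p \<open>x = h i\<close> \<open>z = h k\<close> by simp
    qed
  next
    assume sub: "\<phi> a O \<phi> b \<subseteq> \<phi> c"
    show "?\<psi> a O ?\<psi> b \<subseteq> ?\<psi> c"
    proof
      fix p assume "p \<in> ?\<psi> a O ?\<psi> b"
      then obtain i j k where p: "p = (i, k)" and "(i, j) \<in> ?\<psi> a" "(j, k) \<in> ?\<psi> b"
        by blast
      then have "(h i, h k) \<in> \<phi> c" and "i \<in> A" "k \<in> A" using sub by auto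
      then show "p \<in> ?\<psi> c" unfolding p by simp
    qed
  qed
  moreover have "?\<psi> (compl R a) = A \<times> A - ?\<psi> a" if "a \<in> ?C" for a
    using qual_repD(6)[OF rep that] h_onto by auto
  moreover have "?\<psi> (one R) = A \<times> A"
    using qual_repD(3)[OF rep] h_onto by auto
  moreover have "?\<psi> (ident R) = {(i, i) | i. i \<in> A}"
    using qual_repD(4)[OF rep] h_onto by (auto simp: inj_on_eq_iff[OF h_inj])
  moreover have "?\<psi> (plus R a b) = ?\<psi> a \<union> ?\<psi> b" if "a \<in> ?C" "b \<in> ?C" for a b
    using qual_repD(5)[OF rep that] by auto
  moreover have "?\<psi> (conv R a) = {(j, i). (i, j) \<in> ?\<psi> a}" if "a \<in> ?C" for a
    using qual_repD(7)[OF rep that] by auto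
  ultimately show ?thesis
    unfolding qual_rep_def using qual_repD(2,8)[OF rep] by simp
qed

locale finite_qual_rep =
  fixes R :: "'a na_alg" and D :: "'b set" and \<phi> :: "'a \<Rightarrow> ('b \<times> 'b) set"
  assumes boolean: "boolean_alg R"
    and finite_carrier: "finite (carrier R)"
    and rep: "qual_rep R D \<phi>"
begin

lemma zero_closed: "zero R \<in> carrier R"
  and one_closed: "one R \<in> carrier R"
  and plus_closed: "x \<in> carrier R \<Longrightarrow> y \<in> carrier R \<Longrightarrow> plus R x y \<in> carrier R"
  and compl_closed: "x \<in> carrier R \<Longrightarrow> compl R x \<in> carrier R"
  and plus_compl: "x \<in> carrier R \<Longrightarrow> plus R x (compl R x) = one R"
  using boolean by (simp_all add: boolean_alg_def)

lemma meet_closed: "x \<in> carrier R \<Longrightarrow> y \<in> carrier R \<Longrightarrow> meet R x y \<in> carrier R"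
  unfolding meet_def by (intro compl_closed plus_closed)

lemma rep_subset: "a \<in> carrier R \<Longrightarrow> \<phi> a \<subseteq> D \<times> D"
  using qual_repD(3,5)[OF rep] compl_closed plus_compl by (metis Un_upper1)

lemma rep_meet:
  assumes "a \<in> carrier R" "b \<in> carrier R"
  shows "\<phi> (meet R a b) = \<phi> a \<inter> \<phi> b"
proof -
  have "\<phi> (meet R a b) = D \<times> D - ((D \<times> D - \<phi> a) \<union> (D \<times> D - \<phi> b))"
    using assms unfolding meet_def by (simp add: compl_closed plus_closed qual_repD(5,6)[OF rep])
  then show ?thesis using rep_subset assms by blast
qed

lemma rep_mono: "a \<in> carrier R \<Longrightarrow> b \<in> carrier R \<Longrightarrow> leq R a b \<Longrightarrow> \<phi> a \<subseteq> \<phi> b"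
  unfolding leq_def by (metis qual_repD(5)[OF rep] Un_upper1)

lemma least_element_containing:
  assumes "p \<in> D \<times> D"
  shows "\<exists>c\<in>carrier R. p \<in> \<phi> c \<and> (\<forall>c'\<in>carrier R. p \<in> \<phi> c' \<longrightarrow> \<phi> c \<subseteq> \<phi> c')"
proof -
  let ?S = "\<phi> ` {c \<in> carrier R. p \<in> \<phi> c}"
  have "finite ?S" using finite_carrier by simp
  moreover have "\<phi> (one R) \<in> ?S" using one_closed assms qual_repD(3)[OF rep] by (intro imageI) simp
  ultimately obtain S where "S \<in> ?S" and minimal: "\<forall>S'\<in>?S. S' \<subseteq> S \<longrightarrow> S = S'"
    by (meson finite_has_minimal2)
  then obtain c where c: "c \<in> carrier R" "p \<in> \<phi> c" and S: "S = \<phi> c" by blast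
  have "\<phi> c \<subseteq> \<phi> c'" if c': "c' \<in> carrier R" "p \<in> \<phi> c'" for c'
  proof -
    have meet_c: "\<phi> (meet R c c') = \<phi> c \<inter> \<phi> c'" by (rule rep_meet[OF c(1) c'(1)])
    have "\<phi> (meet R c c') \<in> ?S" using c c' meet_c by (intro imageI) (simp add: meet_closed)
    moreover have "\<phi> (meet R c c') \<subseteq> S" using S meet_c by blast
    ultimately have "S = \<phi> c \<inter> \<phi> c'" using minimal meet_c by blast
    then show ?thesis using S by blast
  qed
  with c show ?thesis by blast
qed

definition atom_of :: "'b \<times> 'b \<Rightarrow> 'a" where
  "atom_of p = (SOME c. c \<in> carrier R \<and> p \<in> \<phi> c \<and> (\<forall>c'\<in>carrier R. p \<in> \<phi> c' \<longrightarrow> \<phi> c \<subseteq> \<phi> c'))"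

lemma atom_of:
  assumes "p \<in> D \<times> D"
  shows atom_of_closed: "atom_of p \<in> carrier R"
    and mem_atom_of: "p \<in> \<phi> (atom_of p)"
    and atom_of_least: "\<And>c. c \<in> carrier R \<Longrightarrow> p \<in> \<phi> c \<Longrightarrow> \<phi> (atom_of p) \<subseteq> \<phi> c"
proof -
  have "atom_of p \<in> carrier R \<and> p \<in> \<phi> (atom_of p) \<and>
      (\<forall>c'\<in>carrier R. p \<in> \<phi> c' \<longrightarrow> \<phi> (atom_of p) \<subseteq> \<phi> c')"
    unfolding atom_of_def using least_element_containing[OF assms] by (rule someI2_bex)
  then show "atom_of p \<in> carrier R" "p \<in> \<phi> (atom_of p)"
    "\<And>c. c \<in> carrier R \<Longrightarrow> p \<in> \<phi> c \<Longrightarrow> \<phi> (atom_of p) \<subseteq> \<phi> c"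
    by blast+
qed

text \<open>Each element either contains \<open>p\<close>, and then contains all of \<open>\<phi> (atom_of p)\<close>, or its
  complement does.\<close>
lemma same_type_atom_of:
  assumes p: "p \<in> D \<times> D" and q: "q \<in> \<phi> (atom_of p)"
  shows "same_type (carrier R) \<phi> p q"
  unfolding same_type_def
proof
  fix v assume v: "v \<in> carrier R"
  show "p \<in> \<phi> v \<longleftrightarrow> q \<in> \<phi> v"
  proof (cases "p \<in> \<phi> v")
    case True
    then show ?thesis using atom_of_least[OF p v] q by blast
  next
    case False
    then have "p \<in> \<phi> (compl R v)" using p v qual_repD(6)[OF rep] by blast
    then have "q \<in> \<phi> (compl R v)" using atom_of_least[OF p compl_closed[OF v]] q by blast
    then show ?thesis using False v qual_repD(6)[OF rep] by blast
  qed
qed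

lemma atom_of_in_atoms:
  assumes p: "p \<in> D \<times> D"
  shows "atom_of p \<in> atoms R"
  unfolding atoms_def is_atom_def
proof (intro CollectI conjI ballI impI)
  show "atom_of p \<in> carrier R" using atom_of_closed[OF p] .
  show "atom_of p \<noteq> zero R" using mem_atom_of[OF p] qual_repD(2)[OF rep] by auto
next
  fix b assume b: "b \<in> carrier R" and "leq R b (atom_of p)"
  then have below: "\<phi> b \<subseteq> \<phi> (atom_of p)" using rep_mono atom_of_closed[OF p] by blast
  have "\<phi> b = \<phi> (zero R) \<or> \<phi> b = \<phi> (atom_of p)"
  proof (cases "p \<in> \<phi> b")
    case True
    then show ?thesis using atom_of_least[OF p b] below by blast
  next
    case False
    then have "\<phi> b = {}" using below same_type_atom_of[OF p] b unfolding same_type_def by blast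
    then show ?thesis using qual_repD(2)[OF rep] by simp
  qed
  then show "b = zero R \<or> b = atom_of p"
    using qual_repD(1)[OF rep] b zero_closed atom_of_closed[OF p] by (meson inj_onD)
qed

lemma finite_atoms: "finite (atoms R)"
  using finite_carrier unfolding atoms_def is_atom_def by (auto intro: rev_finite_subset)

definition realised_triples :: "('a \<times> 'a \<times> 'a) set" where
  "realised_triples = {t \<in> atoms R \<times> atoms R \<times> atoms R. triangles \<phi> t \<noteq> {}}"

definition witness_base :: "'b set" where
  "witness_base = (\<Union>t\<in>realised_triples. vertices (SOME u. u \<in> triangles \<phi> t))"

lemma witness_triangle: "t \<in> realised_triples \<Longrightarrow> (SOME u. u \<in> triangles \<phi> t) \<in> triangles \<phi> t"
  unfolding realised_triples_def by (simp add: some_in_eq)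

lemma realised_triples_subset: "realised_triples \<subseteq> atoms R \<times> atoms R \<times> atoms R"
  unfolding realised_triples_def by blast

lemma finite_realised_triples: "finite realised_triples"
  using realised_triples_subset by (rule finite_subset) (intro finite_SigmaI finite_atoms)

lemma finite_witness_base: "finite witness_base"
  unfolding witness_base_def using finite_realised_triples by (rule finite_UN_I) (rule finite_vertices)

lemma card_witness_base: "card witness_base \<le> 3 * card (atoms R) ^ 3"
proof -
  let ?T = realised_triples
  have "card witness_base \<le> (\<Sum>t\<in>?T. card (vertices (SOME u. u \<in> triangles \<phi> t)))"
    unfolding witness_base_def using finite_realised_triples by (rule card_UN_le)
  also have "\<dots> \<le> (\<Sum>t\<in>?T. 3)" by (rule sum_mono) (rule card_vertices)
  also have "\<dots> = 3 * card ?T" by simp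
  also have "card ?T \<le> card (atoms R) ^ 3"
    using card_mono[OF _ realised_triples_subset] finite_atoms
    by (simp add: card_cartesian_product power3_eq_cube)
  finally show ?thesis by simp
qed

lemma witness_base_subset: "witness_base \<subseteq> D"
proof
  fix u assume "u \<in> witness_base"
  then obtain t where t: "t \<in> realised_triples" and u: "u \<in> vertices (SOME u. u \<in> triangles \<phi> t)"
    unfolding witness_base_def by blast
  obtain a b c where abc: "t = (a, b, c)" by (cases t)
  obtain x y z where xyz: "(SOME u. u \<in> triangles \<phi> t) = (x, y, z)"
    by (cases "SOME u. u \<in> triangles \<phi> t")
  have "(x, y) \<in> \<phi> a" "(y, z) \<in> \<phi> b" "(x, z) \<in> \<phi> c"
    using witness_triangle[OF t] xyz abc by simp_all
  moreover have "a \<in> carrier R" "b \<in> carrier R" "c \<in> carrier R"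
    using t realised_triples_subset abc unfolding atoms_def is_atom_def by auto
  ultimately have "x \<in> D" "y \<in> D" "z \<in> D" using rep_subset by blast+
  then show "u \<in> D" using u unfolding xyz by auto
qed

lemma triangles_realised_witness_base: "triangles_realised (carrier R) \<phi> D witness_base"
  unfolding triangles_realised_def
proof (intro ballI)
  fix x y z assume "x \<in> D" "y \<in> D" "z \<in> D"
  then have xy: "(x, y) \<in> D \<times> D" and yz: "(y, z) \<in> D \<times> D" and xz: "(x, z) \<in> D \<times> D"
    by simp_all
  define t where "t = (atom_of (x, y), atom_of (y, z), atom_of (x, z))"
  have "(x, y, z) \<in> triangles \<phi> t" unfolding t_def using mem_atom_of xy yz xz by simp
  then have t: "t \<in> realised_triples"
    unfolding realised_triples_def t_def using atom_of_in_atoms xy yz xz by auto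
  obtain x' y' z' where xyz': "(SOME u. u \<in> triangles \<phi> t) = (x', y', z')"
    by (cases "SOME u. u \<in> triangles \<phi> t")
  then have "(x', y', z') \<in> triangles \<phi> t" using witness_triangle[OF t] by simp
  then have "same_type (carrier R) \<phi> (x, y) (x', y')" "same_type (carrier R) \<phi> (y, z) (y', z')"
    "same_type (carrier R) \<phi> (x, z) (x', z')"
    unfolding t_def using same_type_atom_of xy yz xz by simp_all
  moreover have "x' \<in> witness_base" "y' \<in> witness_base" "z' \<in> witness_base"
    unfolding witness_base_def using t xyz' by force+
  ultimately show "\<exists>x'\<in>witness_base. \<exists>y'\<in>witness_base. \<exists>z'\<in>witness_base.
      same_type (carrier R) \<phi> (x, y) (x', y') \<and> same_type (carrier R) \<phi> (y, z) (y', z') \<and>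
      same_type (carrier R) \<phi> (x, z) (x', z')"
    by blast
qed

end

theorem mainTheorem6:
  fixes R :: "'a na_alg" and D0 :: "'b set" and \<phi>0 :: "'a \<Rightarrow> ('b \<times> 'b) set"
  assumes "nonassoc_alg R"
    and "finite (carrier R)"
    and "qual_rep R D0 \<phi>0"
  shows "\<exists>(D :: nat set) \<phi>. qual_rep R D \<phi> \<and> finite D \<and>
           card D \<le> 3 * (card (atoms R)) ^ 3"
proof -
  interpret finite_qual_rep R D0 \<phi>0
    using assms by unfold_locales (simp_all add: nonassoc_alg_def)
  let ?D' = witness_base
  have rep': "qual_rep R ?D' (\<lambda>a. \<phi>0 a \<inter> ?D' \<times> ?D')"
    using rep rep_subset witness_base_subset triangles_realised_witness_base
    by (rule qual_rep_restrict)
  obtain h where h: "bij_betw h {0..<card ?D'} ?D'"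
    using ex_bij_betw_nat_finite[OF finite_witness_base] by blast
  have "qual_rep R {0..<card ?D'}
      (\<lambda>a. map_prod h h -` (\<phi>0 a \<inter> ?D' \<times> ?D') \<inter> {0..<card ?D'} \<times> {0..<card ?D'})"
    using rep' _ h by (rule qual_rep_bij_betw) blast
  then show ?thesis using card_witness_base by fastforce
qed

end
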